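(* For $p=2$: $\nu_2((2^4))\ge 4$ and $\nu_2((3^4))\ge 5$.
   Context: $(y^k)$ denotes the partition with $k$ parts equal to $y$. For $\lambda\vdash n$, $S^\lambda_{\mathbb Z}$ is the integral Specht module spanned by polytabloids $e_t$ in the permutation module on $\lambda$-tabloids, which has the bilinear form making tabloids orthonormal. The $p$-Schaper number $\nu_p(\lambda)$ is the least $k$ such that $\overline{S^\lambda_k}/\overline{S^\lambda_{k+1}}\ne 0$, where $S^\lambda_i=\{x\in S^\lambda_{\mathbb Z}:p^i\mid\langle x,y\rangle\ \forall y\}$ and the bar is reduction mod $p$; equivalently, the largest $k$ with $p^k\mid\langle e_s,e_t\rangle$ for all $\lambda$-tableaux $s,t$. *)

theory Defs
  imports "HOL-Combinatorics.Permutations"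
begin

text \<open>A partition is a list of positive parts (weakly decreasing). Its Young diagram
consists of the cells (i,j) with i < number of parts and j < i-th part.\<close>

definition cells :: "nat list \<Rightarrow> (nat \<times> nat) set" where
  "cells la = {(i, j). i < length la \<and> j < la ! i}"

definition psize :: "nat list \<Rightarrow> nat" where
  "psize la = sum_list la"

definition powpart :: "nat \<Rightarrow> nat \<Rightarrow> nat list" where
  "powpart y k = replicate k y"

definition tableau :: "nat list \<Rightarrow> (nat \<times> nat \<Rightarrow> nat) \<Rightarrow> bool" where
  "tableau la t \<longleftrightarrow> bij_betw t (cells la) {1..psize la}"

text \<open>The tabloid {t}: the row-equivalence class of t, recorded as the set of
pairs (row index, entry).\<close>
definition tabloid :: "nat list \<Rightarrow> (nat \<times> nat \<Rightarrow> nat) \<Rightarrow> (nat \<times> nat) set" where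
  "tabloid la t = {(i, t (i, j)) | i j. (i, j) \<in> cells la}"

definition colstab :: "nat list \<Rightarrow> (nat \<times> nat \<Rightarrow> nat) \<Rightarrow> (nat \<Rightarrow> nat) set" where
  "colstab la t = {\<sigma>. \<sigma> permutes {1..psize la} \<and>
      (\<forall>c. \<sigma> ` (t ` {(i, j) \<in> cells la. j = c}) = t ` {(i, j) \<in> cells la. j = c})}"

text \<open>The inner product of polytabloids, e_t = sum over sigma in C_t of sgn(sigma) {sigma t},
with tabloids orthonormal.\<close>
definition gram :: "nat list \<Rightarrow> (nat \<times> nat \<Rightarrow> nat) \<Rightarrow> (nat \<times> nat \<Rightarrow> nat) \<Rightarrow> int" where
  "gram la s t = (\<Sum>\<sigma>\<in>colstab la s. \<Sum>\<tau>\<in>colstab la t.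
      sign \<sigma> * sign \<tau> * (if tabloid la (\<sigma> \<circ> s) = tabloid la (\<tau> \<circ> t) then 1 else 0))"

definition schaper :: "nat \<Rightarrow> nat list \<Rightarrow> nat" where
  "schaper p la = (GREATEST e. \<forall>s t. tableau la s \<longrightarrow> tableau la t \<longrightarrow>
      int p ^ e dvd gram la s t)"

end

theory Submission
  imports Defs
begin

text \<open>Let \<open>\<lambda> = (m\<^sup>n)\<close> with \<open>0 < m < n\<close> and \<open>n \<ge> 3\<close>. For \<open>\<lambda>\<close>-tableaux \<open>s\<close> and \<open>t\<close>,
  \<open>\<langle>e\<^sub>s, e\<^sub>t\<rangle>\<close> is a signed count of the pairs \<open>(\<sigma>, \<tau>) \<in> C\<^sub>s \<times> C\<^sub>t\<close> with
  \<open>{\<sigma> s} = {\<tau> t}\<close>. The group \<open>(\<int>/2)\<^sup>m \<times> \<int>/n\<close> acts freely and sign-preservingly on these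
  pairs. The factor \<open>\<int>/n\<close> acts on the right, rotating the rows of \<open>s\<close> and of \<open>t\<close> simultaneously;
  both rotations permute the tabloids in the same way, and they are conjugate, hence of equal sign.
  The factor \<open>(\<int>/2)\<^sup>m\<close> acts on the left by transpositions in \<open>C\<^sub>s \<inter> C\<^sub>t\<close>: by pigeonhole,
  each column of \<open>s\<close> has two entries lying in one column of \<open>t\<close>, and we may swap them.
  Freeness is seen on an entry of the first column of \<open>s\<close> moved by none of the transpositions.
  Hence \<open>n 2\<^sup>m\<close> divides every Gram entry, and for \<open>n = 4\<close> this gives \<open>\<nu>\<^sub>2 \<ge> m + 2\<close>.\<close>

lemma card_dvd_sum_free_action:
  fixes X :: "'a set" and I :: "'b set" and act :: "'b \<Rightarrow> 'a \<Rightarrow> 'a" and w :: "'a \<Rightarrow> int"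
  assumes "finite X" "I \<noteq> {}"
    and closed: "\<And>i x. i \<in> I \<Longrightarrow> x \<in> X \<Longrightarrow> act i x \<in> X"
    and invariant: "\<And>i x. i \<in> I \<Longrightarrow> x \<in> X \<Longrightarrow> w (act i x) = w x"
    and free: "\<And>i j x. i \<in> I \<Longrightarrow> j \<in> I \<Longrightarrow> x \<in> X \<Longrightarrow> act i x = act j x \<Longrightarrow> i = j"
    and inverse: "\<And>i x. i \<in> I \<Longrightarrow> x \<in> X \<Longrightarrow> \<exists>j\<in>I. act j (act i x) = x"
    and compose: "\<And>i j x. i \<in> I \<Longrightarrow> j \<in> I \<Longrightarrow> x \<in> X \<Longrightarrow> \<exists>k\<in>I. act j (act i x) = act k x"
  shows "int (card I) dvd (\<Sum>x\<in>X. w x)"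
  using assms(1) closed invariant free inverse compose
proof (induction "card X" arbitrary: X rule: less_induct)
  case less
  show ?case
  proof (cases "X = {}")
    case False
    then obtain x where x: "x \<in> X" by blast
    define orbit where "orbit = (\<lambda>i. act i x) ` I"
    have "x \<in> orbit"
    proof -
      obtain i where i: "i \<in> I" using assms(2) by blast
      obtain j where j: "j \<in> I" "act j (act i x) = x" using less.prems(5)[OF i x] by blast
      with less.prems(6)[OF i j(1) x] show ?thesis unfolding orbit_def by (metis image_eqI)
    qed
    have "orbit \<subseteq> X" using less.prems(2) x by (auto simp: orbit_def)
    have sum_orbit: "(\<Sum>y\<in>orbit. w y) = int (card I) * w x"
    proof -
      have "inj_on (\<lambda>i. act i x) I" using less.prems(4) x by (auto simp: inj_on_def)
      then have "(\<Sum>y\<in>orbit. w y) = (\<Sum>i\<in>I. w (act i x))"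
        unfolding orbit_def by (simp add: sum.reindex)
      also have "\<dots> = int (card I) * w x" using less.prems(3) x by simp
      finally show ?thesis .
    qed
    \<comment> \<open>The complement of an orbit is again invariant, so induction applies to it.\<close>
    have rest_closed: "act i y \<in> X - orbit" if i: "i \<in> I" and y: "y \<in> X - orbit" for i y
    proof -
      have "act i y \<notin> orbit"
      proof
        assume "act i y \<in> orbit"
        then obtain j where j: "j \<in> I" "act i y = act j x" by (auto simp: orbit_def)
        obtain i' where i': "i' \<in> I" "act i' (act i y) = y" using less.prems(5) i y by blast
        obtain k where "k \<in> I" "act i' (act j x) = act k x" using less.prems(6)[OF j(1) i'(1) x] by blast
        with i' j y show False by (auto simp: orbit_def)
      qed
      with less.prems(2) i y show ?thesis by blast
    qed
    have "card (X - orbit) < card X"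
      using \<open>x \<in> orbit\<close> x less.prems(1) by (intro psubset_card_mono) auto
    then have "int (card I) dvd (\<Sum>y\<in>X - orbit. w y)"
      using less.prems rest_closed by (intro less.hyps) auto
    moreover have "(\<Sum>y\<in>X. w y) = (\<Sum>y\<in>orbit. w y) + (\<Sum>y\<in>X - orbit. w y)"
      using \<open>orbit \<subseteq> X\<close> less.prems(1) by (metis add.commute sum.subset_diff)
    ultimately show ?thesis using sum_orbit by simp
  qed simp
qed

definition transport :: "('c \<Rightarrow> 'a) \<Rightarrow> 'c set \<Rightarrow> ('c \<Rightarrow> 'c) \<Rightarrow> 'a \<Rightarrow> 'a" where
  "transport s C f x = (if x \<in> s ` C then s (f (inv_into C s x)) else x)"

lemma transport_apply: "inj_on s C \<Longrightarrow> c \<in> C \<Longrightarrow> transport s C f (s c) = s (f c)"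
  by (simp add: transport_def)

lemma transport_outside: "x \<notin> s ` C \<Longrightarrow> transport s C f x = x"
  by (simp add: transport_def)

lemma transport_id: "(\<And>c. c \<in> C \<Longrightarrow> f c = c) \<Longrightarrow> transport s C f = id"
  by (auto simp: transport_def fun_eq_iff inv_into_into f_inv_into_f)

lemma transport_comp:
  assumes "inj_on s C" "f ` C \<subseteq> C" "g ` C \<subseteq> C"
  shows "transport s C f \<circ> transport s C g = transport s C (f \<circ> g)"
proof
  fix x
  show "(transport s C f \<circ> transport s C g) x = transport s C (f \<circ> g) x"
    using assms by (cases "x \<in> s ` C") (auto simp: transport_apply transport_outside)
qed

lemma transport_permutes:
  assumes "inj_on s C" "bij_betw f C C"
  shows "transport s C f permutes (s ` C)"
proof (rule bij_imp_permutes)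
  have "bij_betw (s \<circ> f \<circ> inv_into C s) (s ` C) (s ` C)"
    using assms by (meson bij_betw_inv_into bij_betw_trans inj_on_imp_bij_betw)
  then show "bij_betw (transport s C f) (s ` C) (s ` C)"
    by (rule bij_betw_cong[THEN iffD1, rotated]) (auto simp: transport_def)
qed (simp add: transport_outside)

text \<open>Transports of the same cell permutation along two numberings are conjugate, by the
  relabelling \<open>t \<circ> inv_into C s\<close>.\<close>
lemma sign_transport_eq:
  assumes "inj_on s C" "inj_on t C" "t ` C = s ` C" "finite C" "bij_betw f C C"
  shows "sign (transport t C f) = sign (transport s C f)"
proof -
  define g where "g x = (if x \<in> s ` C then t (inv_into C s x) else x)" for x
  have "bij_betw (t \<circ> inv_into C s) (s ` C) (s ` C)"
    using assms(1-3) by (metis bij_betw_inv_into bij_betw_trans inj_on_imp_bij_betw)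
  then have g: "g permutes (s ` C)"
    by (intro bij_imp_permutes) (auto simp: g_def elim: bij_betw_cong[THEN iffD1, rotated])
  have "transport t C f \<circ> g = g \<circ> transport s C f"
  proof
    fix x
    show "(transport t C f \<circ> g) x = (g \<circ> transport s C f) x"
    proof (cases "x \<in> s ` C")
      case True
      then obtain c where "c \<in> C" "x = s c" by blast
      moreover have "f c \<in> C" using assms(5) \<open>c \<in> C\<close> by (auto simp: bij_betw_def)
      ultimately show ?thesis using assms(1,2) by (simp add: g_def transport_apply)
    qed (use assms(3) in \<open>simp add: transport_outside g_def\<close>)
  qed
  moreover have "transport t C f permutes (s ` C)" "transport s C f permutes (s ` C)"
    using transport_permutes assms by (metis, blast)
  ultimately have "sign (transport t C f) * sign g = sign g * sign (transport s C f)"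
    using g assms(4) by (metis sign_compose permutes_imp_permutation finite_imageI)
  moreover have "sign g \<noteq> 0" by (simp add: sign_def)
  ultimately show ?thesis by (simp add: mult.commute)
qed


lemma colstab_permutes: "\<sigma> \<in> colstab la s \<Longrightarrow> \<sigma> permutes {1..psize la}"
  by (simp add: colstab_def)

lemma finite_colstab: "finite (colstab la s)"
  by (rule finite_subset[OF _ finite_permutations[of "{1..psize la}"]]) (auto simp: colstab_def)

lemma colstab_comp: "\<sigma> \<in> colstab la s \<Longrightarrow> \<sigma>' \<in> colstab la s \<Longrightarrow> \<sigma> \<circ> \<sigma>' \<in> colstab la s"
  unfolding colstab_def mem_Collect_eq image_comp[symmetric]
  by (simp add: permutes_compose del: image_image)

lemma tabloid_cong: "(\<And>c. c \<in> cells la \<Longrightarrow> h c = h' c) \<Longrightarrow> tabloid la h = tabloid la h'"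
  unfolding tabloid_def by (metis (no_types, lifting))

lemma tabloid_comp_left_cong:
  assumes "tabloid la h = tabloid la h'"
  shows "tabloid la (r \<circ> h) = tabloid la (r \<circ> h')"
proof -
  have "tabloid la (r \<circ> h) = (\<lambda>(i, x). (i, r x)) ` tabloid la h" for h
    unfolding tabloid_def by (auto simp: image_iff) blast
  then show ?thesis using assms by simp
qed

lemma gram_eq_sum_matching:
  "gram la s t = (\<Sum>(\<sigma>, \<tau>)\<in>{(\<sigma>, \<tau>) \<in> colstab la s \<times> colstab la t.
      tabloid la (\<sigma> \<circ> s) = tabloid la (\<tau> \<circ> t)}. sign \<sigma> * sign \<tau>)"
proof -
  have "gram la s t = (\<Sum>(\<sigma>, \<tau>)\<in>colstab la s \<times> colstab la t.
      if tabloid la (\<sigma> \<circ> s) = tabloid la (\<tau> \<circ> t) then sign \<sigma> * sign \<tau> else 0)"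
    unfolding gram_def sum.cartesian_product by (intro sum.cong) auto
  also have "\<dots> = (\<Sum>(\<sigma>, \<tau>)\<in>{(\<sigma>, \<tau>) \<in> colstab la s \<times> colstab la t.
      tabloid la (\<sigma> \<circ> s) = tabloid la (\<tau> \<circ> t)}. sign \<sigma> * sign \<tau>)"
    by (rule sum.mono_neutral_cong_right)
      (use finite_colstab in \<open>auto split: prod.splits simp del: set_eq_iff\<close>)
  finally show ?thesis .
qed

definition swap_in_columns ::
    "(nat \<Rightarrow> nat) \<Rightarrow> (nat \<Rightarrow> nat) \<Rightarrow> nat set \<Rightarrow> nat \<times> nat \<Rightarrow> nat \<times> nat" where
  "swap_in_columns p q B =
    (\<lambda>(i, j). (if j \<in> B then Transposition.transpose (p j) (q j) i else i, j))"

lemma swap_in_columns_comp: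
  "swap_in_columns p q B \<circ> swap_in_columns p q B' = swap_in_columns p q ((B - B') \<union> (B' - B))"
  by (auto simp: swap_in_columns_def fun_eq_iff)

lemma swap_in_columns_empty: "swap_in_columns p q {} = id"
  by (auto simp: swap_in_columns_def fun_eq_iff)

lemma add_mod_cancel_left:
  fixes i k k' n :: nat
  assumes "(i + k) mod n = (i + k') mod n" "i < n" "k < n" "k' < n"
  shows "k = k'"
proof -
  have "(i + k + (n - i)) mod n = (i + k' + (n - i)) mod n"
    using assms(1) by (metis mod_add_left_eq)
  with assms(2-4) show ?thesis by simp
qed

lemma add_complement_mod: "(k::nat) < n \<Longrightarrow> (k + (n - k) mod n) mod n = 0"
  by (cases "k = 0") simp_all


locale rectangle =
  fixes m n :: nat
  assumes m_pos: "0 < m" and m_less_n: "m < n" and three_le_n: "3 \<le> n"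
begin

abbreviation shape where "shape \<equiv> powpart m n"
abbreviation box where "box \<equiv> {..<n} \<times> {..<m}"
abbreviation entries where "entries \<equiv> {1..n * m}"

lemma cells_shape: "cells shape = box"
  by (auto simp: cells_def powpart_def)

lemma psize_shape: "psize shape = n * m"
  by (simp add: psize_def powpart_def sum_list_replicate)

lemma tableau_shape: "tableau shape s \<longleftrightarrow> inj_on s box \<and> s ` box = entries"
  by (simp add: tableau_def cells_shape psize_shape bij_betw_def)

lemma exists_tableau: "\<exists>s. tableau shape s"
  unfolding tableau_def cells_shape psize_shape
  by (rule finite_same_card_bij) auto

lemma tableau_entry:
  assumes "tableau shape s" "x \<in> entries"
  obtains i j where "i < n" "j < m" "x = s (i, j)"
proof -
  have "x \<in> s ` box" using assms by (simp add: tableau_shape)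
  then show ?thesis using that by blast
qed

lemma tableau_in_entries: "tableau shape s \<Longrightarrow> i < n \<Longrightarrow> j < m \<Longrightarrow> s (i, j) \<in> entries"
  by (auto simp: tableau_shape)

definition col :: "(nat \<times> nat \<Rightarrow> nat) \<Rightarrow> nat \<Rightarrow> nat" where
  "col s x = snd (inv_into box s x)"

lemma col_apply: "inj_on s box \<Longrightarrow> i < n \<Longrightarrow> j < m \<Longrightarrow> col s (s (i, j)) = j"
  by (simp add: col_def)

lemma col_less: "tableau shape t \<Longrightarrow> x \<in> entries \<Longrightarrow> col t x < m"
  by (metis col_apply tableau_entry tableau_shape)

lemma column_image:
  assumes "tableau shape s"
  shows "s ` {(i, j) \<in> cells shape. j = c} = {x \<in> entries. col s x = c}"
proof (intro set_eqI iffI)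
  fix x
  assume x: "x \<in> {x \<in> entries. col s x = c}"
  then obtain i j where "i < n" "j < m" "x = s (i, j)" using tableau_entry[OF assms] by blast
  with x assms show "x \<in> s ` {(i, j) \<in> cells shape. j = c}"
    by (auto simp: cells_shape tableau_shape col_apply)
qed (use assms in \<open>auto simp: cells_shape tableau_shape col_apply\<close>)

lemma colstab_iff:
  assumes "tableau shape s"
  shows "\<sigma> \<in> colstab shape s \<longleftrightarrow> \<sigma> permutes entries \<and> (\<forall>x\<in>entries. col s (\<sigma> x) = col s x)"
proof
  assume \<sigma>: "\<sigma> \<in> colstab shape s"
  have columns: "\<sigma> ` {x \<in> entries. col s x = c} = {x \<in> entries. col s x = c}" for c
    using \<sigma> by (simp add: colstab_def column_image[OF assms])
  have "col s (\<sigma> x) = col s x" if "x \<in> entries" for x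
  proof -
    have "\<sigma> x \<in> \<sigma> ` {y \<in> entries. col s y = col s x}" using that by blast
    then show ?thesis unfolding columns by blast
  qed
  with colstab_permutes[OF \<sigma>] show "\<sigma> permutes entries \<and> (\<forall>x\<in>entries. col s (\<sigma> x) = col s x)"
    by (simp add: psize_shape)
next
  assume \<sigma>: "\<sigma> permutes entries \<and> (\<forall>x\<in>entries. col s (\<sigma> x) = col s x)"
  have "\<sigma> ` {x \<in> entries. col s x = c} = {x \<in> entries. col s x = c}" for c
  proof (rule endo_inj_surj)
    show "\<sigma> ` {x \<in> entries. col s x = c} \<subseteq> {x \<in> entries. col s x = c}"
      using \<sigma> permutes_in_image[of \<sigma> entries] by auto
    show "inj_on \<sigma> {x \<in> entries. col s x = c}"
      using \<sigma> by (meson inj_on_subset mem_Collect_eq permutes_inj_on subsetI)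
  qed simp
  then show "\<sigma> \<in> colstab shape s"
    using \<sigma> by (simp add: colstab_def psize_shape column_image[OF assms])
qed

definition rotate_rows :: "nat \<Rightarrow> nat \<times> nat \<Rightarrow> nat \<times> nat" where
  "rotate_rows k = (\<lambda>(i, j). ((i + k) mod n, j))"

lemma rotate_rows_in_box: "c \<in> box \<Longrightarrow> rotate_rows k c \<in> box"
  using m_less_n by (auto simp: rotate_rows_def)

lemma rotate_rows_comp: "rotate_rows k \<circ> rotate_rows k' = rotate_rows ((k + k') mod n)"
  by (auto simp: rotate_rows_def fun_eq_iff mod_add_left_eq mod_add_right_eq ac_simps)

lemma rotate_rows_0: "c \<in> box \<Longrightarrow> rotate_rows 0 c = c"
  by (auto simp: rotate_rows_def)

lemma bij_rotate_rows: "k < n \<Longrightarrow> bij_betw (rotate_rows k) box box"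
proof (rule bij_betwI[where g = "rotate_rows ((n - k) mod n)"])
  assume k: "k < n"
  show "rotate_rows k \<in> box \<rightarrow> box" "rotate_rows ((n - k) mod n) \<in> box \<rightarrow> box"
    by (auto intro: rotate_rows_in_box)
  fix c
  assume "c \<in> box"
  then show "rotate_rows ((n - k) mod n) (rotate_rows k c) = c"
    "rotate_rows k (rotate_rows ((n - k) mod n) c) = c"
    using add_complement_mod[OF k] rotate_rows_comp rotate_rows_0
    by (metis add.commute comp_apply)+
qed

lemma rotate_rows_eq_imp_eq:
  "c \<in> box \<Longrightarrow> k < n \<Longrightarrow> k' < n \<Longrightarrow> rotate_rows k c = rotate_rows k' c \<Longrightarrow> k = k'"
  by (auto simp: rotate_rows_def intro: add_mod_cancel_left)

lemma tabloid_comp_rotate_rows_cong: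
  assumes "tabloid shape h = tabloid shape h'"
  shows "tabloid shape (h \<circ> rotate_rows k) = tabloid shape (h' \<circ> rotate_rows k)"
proof -
  have "tabloid shape (h \<circ> rotate_rows k) \<subseteq> tabloid shape (h' \<circ> rotate_rows k)"
    if eq: "tabloid shape h = tabloid shape h'" for h h'
  proof
    fix z
    assume "z \<in> tabloid shape (h \<circ> rotate_rows k)"
    then obtain i j where ij: "i < n" "j < m" "z = (i, h ((i + k) mod n, j))"
      by (auto simp: tabloid_def cells_shape rotate_rows_def)
    have "((i + k) mod n, h ((i + k) mod n, j)) \<in> tabloid shape h"
      using ij m_less_n by (auto simp: tabloid_def cells_shape)
    then obtain j' where "j' < m" "h ((i + k) mod n, j) = h' ((i + k) mod n, j')"
      unfolding eq by (auto simp: tabloid_def cells_shape)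
    with ij show "z \<in> tabloid shape (h' \<circ> rotate_rows k)"
      by (auto simp: tabloid_def cells_shape rotate_rows_def)
  qed
  with assms show ?thesis by blast
qed

definition row_rotation :: "(nat \<times> nat \<Rightarrow> nat) \<Rightarrow> nat \<Rightarrow> nat \<Rightarrow> nat" where
  "row_rotation s k = transport s box (rotate_rows k)"

lemma row_rotation_apply: "inj_on s box \<Longrightarrow> c \<in> box \<Longrightarrow> row_rotation s k (s c) = s (rotate_rows k c)"
  by (simp add: row_rotation_def transport_apply)

lemma row_rotation_comp:
  "inj_on s box \<Longrightarrow> row_rotation s k \<circ> row_rotation s k' = row_rotation s ((k + k') mod n)"
  unfolding row_rotation_def
  by (simp add: transport_comp rotate_rows_in_box image_subsetI rotate_rows_comp)

lemma row_rotation_0: "row_rotation s 0 = id"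
  unfolding row_rotation_def by (rule transport_id) (rule rotate_rows_0)

lemma row_rotation_permutes: "tableau shape s \<Longrightarrow> k < n \<Longrightarrow> row_rotation s k permutes entries"
  unfolding row_rotation_def tableau_shape by (metis transport_permutes bij_rotate_rows)

lemma row_rotation_in_colstab:
  assumes s: "tableau shape s" and k: "k < n"
  shows "row_rotation s k \<in> colstab shape s"
proof -
  have "col s (row_rotation s k x) = col s x" if x: "x \<in> entries" for x
  proof -
    obtain i j where "i < n" "j < m" "x = s (i, j)" using tableau_entry[OF s x] .
    with s m_less_n show ?thesis
      by (simp add: tableau_shape row_rotation_apply rotate_rows_def col_apply)
  qed
  with row_rotation_permutes[OF s k] show ?thesis by (simp add: colstab_iff[OF s])
qed

lemma sign_row_rotation:
  "tableau shape s \<Longrightarrow> tableau shape t \<Longrightarrow> k < n \<Longrightarrow> sign (row_rotation t k) = sign (row_rotation s k)"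
  unfolding row_rotation_def tableau_shape by (intro sign_transport_eq bij_rotate_rows) auto

lemma row_rotation_eq_imp_eq:
  assumes s: "tableau shape s" and "x \<in> entries" "k < n" "k' < n"
    and "row_rotation s k x = row_rotation s k' x"
  shows "k = k'"
proof -
  obtain i j where ij: "i < n" "j < m" "x = s (i, j)" using tableau_entry[OF s assms(2)] .
  then have "s (rotate_rows k (i, j)) = s (rotate_rows k' (i, j))"
    using assms(5) s by (simp add: tableau_shape row_rotation_apply)
  then have "rotate_rows k (i, j) = rotate_rows k' (i, j)"
    using s ij by (auto simp: tableau_shape intro: inj_onD rotate_rows_in_box)
  with ij assms(3,4) show ?thesis by (auto intro: rotate_rows_eq_imp_eq)
qed

lemma tabloid_comp_row_rotation:
  "tableau shape s \<Longrightarrow> tabloid shape (\<sigma> \<circ> row_rotation s k \<circ> s) = tabloid shape (\<sigma> \<circ> s \<circ> rotate_rows k)"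
  by (intro tabloid_cong) (auto simp: cells_shape tableau_shape row_rotation_apply)

lemma colstab_tabloid_inj:
  assumes s: "tableau shape s" and \<sigma>: "\<sigma> \<in> colstab shape s" and \<tau>: "\<tau> \<in> colstab shape s"
    and eq: "tabloid shape (\<sigma> \<circ> s) = tabloid shape (\<tau> \<circ> s)"
  shows "\<sigma> = \<tau>"
proof
  fix x
  show "\<sigma> x = \<tau> x"
  proof (cases "x \<in> entries")
    case False
    then show ?thesis using \<sigma> \<tau> by (metis colstab_iff[OF s] permutes_not_in)
  next
    case True
    then obtain i j where ij: "i < n" "j < m" "x = s (i, j)" using tableau_entry[OF s] by blast
    have "(i, \<sigma> x) \<in> tabloid shape (\<tau> \<circ> s)"
      unfolding eq[symmetric] using ij by (auto simp: tabloid_def cells_shape)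
    then obtain j' where j': "j' < m" "\<sigma> x = \<tau> (s (i, j'))"
      by (auto simp: tabloid_def cells_shape)
    \<comment> \<open>Both permutations preserve the columns of \<open>s\<close>, so \<open>j' = j\<close>.\<close>
    have "col s (\<sigma> x) = j" "col s (\<tau> (s (i, j'))) = j'"
      using \<sigma> \<tau> True ij j'(1) s tableau_in_entries[OF s]
      by (auto simp: colstab_iff[OF s] tableau_shape col_apply)
    with j' ij show ?thesis by simp
  qed
qed

lemma gram_diagonal:
  assumes s: "tableau shape s"
  shows "gram shape s s = int (card (colstab shape s))"
proof -
  have "gram shape s s = (\<Sum>\<sigma>\<in>colstab shape s. \<Sum>\<tau>\<in>colstab shape s. if \<sigma> = \<tau> then 1 else 0)"
    unfolding gram_def using colstab_tabloid_inj[OF s]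
    by (intro sum.cong refl) (auto simp: sign_def)
  then show ?thesis by (simp add: finite_colstab)
qed

lemma exists_column_pairs:
  assumes s: "tableau shape s" and t: "tableau shape t"
  obtains p q where "\<And>j. j < m \<Longrightarrow> p j < n \<and> q j < n \<and> p j \<noteq> q j"
    and "\<And>j. j < m \<Longrightarrow> col t (s (p j, j)) = col t (s (q j, j))"
proof -
  \<comment> \<open>Pigeonhole: the \<open>n\<close> entries of a column of \<open>s\<close> lie in fewer than \<open>n\<close> columns of \<open>t\<close>.\<close>
  have "\<exists>ab. fst ab < n \<and> snd ab < n \<and> fst ab \<noteq> snd ab \<and>
      col t (s (fst ab, j)) = col t (s (snd ab, j))" if j: "j < m" for j
  proof -
    let ?f = "\<lambda>a. col t (s (a, j))"
    have "?f ` {..<n} \<subseteq> {..<m}"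
      using col_less[OF t] tableau_in_entries[OF s _ j] by auto
    then have "card (?f ` {..<n}) < card {..<n}"
      using m_less_n by (metis card_lessThan card_mono finite_lessThan le_less_trans)
    then have "\<not> inj_on ?f {..<n}" by (rule pigeonhole)
    then obtain a b where "a < n" "b < n" "a \<noteq> b" "?f a = ?f b" by (auto simp: inj_on_def)
    then show ?thesis by (intro exI[of _ "(a, b)"]) simp
  qed
  then obtain f where "\<forall>j<m. fst (f j) < n \<and> snd (f j) < n \<and> fst (f j) \<noteq> snd (f j) \<and>
      col t (s (fst (f j), j)) = col t (s (snd (f j), j))"
    by (metis (no_types))
  then show ?thesis using that[of "fst \<circ> f" "snd \<circ> f"] by simp
qed

end

locale rectangle_pair = rectangle +
  fixes s t :: "nat \<times> nat \<Rightarrow> nat" and p q :: "nat \<Rightarrow> nat"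
  assumes tableau_s: "tableau (powpart m n) s" and tableau_t: "tableau (powpart m n) t"
    and rows_pq: "\<And>j. j < m \<Longrightarrow> p j < n \<and> q j < n \<and> p j \<noteq> q j"
    and same_column: "\<And>j. j < m \<Longrightarrow> col t (s (p j, j)) = col t (s (q j, j))"
begin

lemma inj_s: "inj_on s box" and image_s: "s ` box = entries"
  using tableau_s by (simp_all add: tableau_shape)

lemma swap_in_columns_in_box: "c \<in> box \<Longrightarrow> swap_in_columns p q B c \<in> box"
  using rows_pq by (auto simp: swap_in_columns_def transpose_def)

lemma swap_in_columns_image: "swap_in_columns p q B ` box \<subseteq> box"
  using swap_in_columns_in_box by blast

lemma bij_swap_in_columns: "bij_betw (swap_in_columns p q B) box box"
proof -
  have involutive: "swap_in_columns p q B (swap_in_columns p q B c) = c" for c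
    using fun_cong[OF swap_in_columns_comp[of p q B B], of c] by (simp add: swap_in_columns_empty)
  show ?thesis
    by (rule bij_betwI[where g = "swap_in_columns p q B"]) (auto simp: involutive swap_in_columns_in_box)
qed

definition swaps :: "nat set \<Rightarrow> nat \<Rightarrow> nat" where
  "swaps B = transport s box (swap_in_columns p q B)"

lemma swaps_apply: "c \<in> box \<Longrightarrow> swaps B (s c) = s (swap_in_columns p q B c)"
  by (simp add: swaps_def transport_apply inj_s)

lemma swaps_comp: "swaps B \<circ> swaps B' = swaps ((B - B') \<union> (B' - B))"
  unfolding swaps_def swap_in_columns_comp[symmetric]
  by (rule transport_comp[OF inj_s swap_in_columns_image swap_in_columns_image])

lemma swaps_empty: "swaps {} = id"
  by (simp add: swaps_def swap_in_columns_empty transport_id)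

lemma swaps_involutive: "swaps B (swaps B x) = x"
  using fun_cong[OF swaps_comp[of B B], of x] by (simp add: swaps_empty)

lemma swaps_permutes: "swaps B permutes entries"
  unfolding swaps_def image_s[symmetric] by (intro transport_permutes inj_s bij_swap_in_columns)

lemma swaps_in_colstab_s: "swaps B \<in> colstab shape s"
proof -
  have "col s (swaps B x) = col s x" if x: "x \<in> entries" for x
  proof -
    obtain i j where ij: "i < n" "j < m" "x = s (i, j)" using tableau_entry[OF tableau_s x] .
    moreover obtain i' where "swap_in_columns p q B (i, j) = (i', j)" "i' < n"
      using swap_in_columns_in_box[of "(i, j)" B] ij by (auto simp: swap_in_columns_def)
    ultimately show ?thesis by (simp add: swaps_apply col_apply inj_s)
  qed
  then show ?thesis using swaps_permutes colstab_iff[OF tableau_s] by blast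
qed

lemma swaps_in_colstab_t: "swaps B \<in> colstab shape t"
proof -
  have "col t (swaps B x) = col t x" if x: "x \<in> entries" for x
  proof -
    obtain i j where ij: "i < n" "j < m" "x = s (i, j)" using tableau_entry[OF tableau_s x] .
    then show ?thesis
      using same_column[OF ij(2)] by (simp add: swaps_apply swap_in_columns_def transpose_def)
  qed
  then show ?thesis using swaps_permutes colstab_iff[OF tableau_t] by blast
qed

lemma swaps_other_row: "r < n \<Longrightarrow> r \<noteq> p 0 \<Longrightarrow> r \<noteq> q 0 \<Longrightarrow> swaps B (s (r, 0)) = s (r, 0)"
  using m_pos by (simp add: swaps_apply swap_in_columns_def)

lemma swaps_eq_imp_eq:
  assumes "swaps B = swaps B'" "B \<subseteq> {..<m}" "B' \<subseteq> {..<m}"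
  shows "B = B'"
proof -
  have "j \<in> B'" if "j \<in> B" "swaps B = swaps B'" "B \<subseteq> {..<m}" for j B B'
  proof (rule ccontr)
    assume "j \<notin> B'"
    have j: "j < m" using that(1,3) by blast
    then have "swaps B (s (p j, j)) = s (q j, j)" "swaps B' (s (p j, j)) = s (p j, j)"
      using rows_pq[OF j] \<open>j \<in> B\<close> \<open>j \<notin> B'\<close> by (simp_all add: swaps_apply swap_in_columns_def)
    moreover have "s (q j, j) \<noteq> s (p j, j)"
      using rows_pq[OF j] j inj_s by (simp add: inj_on_eq_iff)
    ultimately show False using that(2) by simp
  qed
  from this[OF _ assms(1,2)] this[OF _ assms(1)[symmetric] assms(3)] show ?thesis
    by blast
qed

definition act ::
    "nat set \<times> nat \<Rightarrow> (nat \<Rightarrow> nat) \<times> (nat \<Rightarrow> nat) \<Rightarrow> (nat \<Rightarrow> nat) \<times> (nat \<Rightarrow> nat)" where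
  "act = (\<lambda>(B, k) (\<sigma>, \<tau>).
    (swaps B \<circ> \<sigma> \<circ> row_rotation s k, swaps B \<circ> \<tau> \<circ> row_rotation t k))"

definition matching :: "((nat \<Rightarrow> nat) \<times> (nat \<Rightarrow> nat)) set" where
  "matching = {(\<sigma>, \<tau>) \<in> colstab shape s \<times> colstab shape t.
    tabloid shape (\<sigma> \<circ> s) = tabloid shape (\<tau> \<circ> t)}"

abbreviation acting_group :: "(nat set \<times> nat) set" where
  "acting_group \<equiv> Pow {..<m} \<times> {..<n}"

lemma act_in_matching:
  assumes "g \<in> acting_group" "x \<in> matching"
  shows "act g x \<in> matching"
proof -
  obtain B k \<sigma> \<tau> where g: "g = (B, k)" "k < n" and x: "x = (\<sigma>, \<tau>)"
    "\<sigma> \<in> colstab shape s" "\<tau> \<in> colstab shape t" "tabloid shape (\<sigma> \<circ> s) = tabloid shape (\<tau> \<circ> t)"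
    using assms by (auto simp: matching_def)
  have "tabloid shape (swaps B \<circ> \<sigma> \<circ> s) = tabloid shape (swaps B \<circ> \<tau> \<circ> t)"
    using tabloid_comp_left_cong[OF x(4), of "swaps B"] by (simp add: comp_assoc)
  then have "tabloid shape (swaps B \<circ> \<sigma> \<circ> s \<circ> rotate_rows k)
      = tabloid shape (swaps B \<circ> \<tau> \<circ> t \<circ> rotate_rows k)"
    by (rule tabloid_comp_rotate_rows_cong)
  then have "tabloid shape (swaps B \<circ> \<sigma> \<circ> row_rotation s k \<circ> s)
      = tabloid shape (swaps B \<circ> \<tau> \<circ> row_rotation t k \<circ> t)"
    by (simp only: tabloid_comp_row_rotation[OF tableau_s] tabloid_comp_row_rotation[OF tableau_t])
  moreover have "swaps B \<circ> \<sigma> \<circ> row_rotation s k \<in> colstab shape s"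
    by (intro colstab_comp swaps_in_colstab_s row_rotation_in_colstab tableau_s x(2) g(2))
  moreover have "swaps B \<circ> \<tau> \<circ> row_rotation t k \<in> colstab shape t"
    by (intro colstab_comp swaps_in_colstab_t row_rotation_in_colstab tableau_t x(3) g(2))
  ultimately show ?thesis by (simp add: matching_def act_def g x)
qed

lemma sign_act:
  assumes "g \<in> acting_group" "x \<in> matching"
  shows "(case act g x of (\<sigma>, \<tau>) \<Rightarrow> sign \<sigma> * sign \<tau>) = (case x of (\<sigma>, \<tau>) \<Rightarrow> sign \<sigma> * sign \<tau>)"
proof -
  obtain B k \<sigma> \<tau> where g: "g = (B, k)" "k < n" and x: "x = (\<sigma>, \<tau>)"
    "\<sigma> \<in> colstab shape s" "\<tau> \<in> colstab shape t"
    using assms by (auto simp: matching_def)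
  have perms: "permutation (swaps B)" "permutation \<sigma>" "permutation \<tau>"
    "permutation (row_rotation s k)" "permutation (row_rotation t k)"
    using swaps_permutes x(2,3) row_rotation_permutes[OF tableau_s g(2)]
      row_rotation_permutes[OF tableau_t g(2)]
    by (auto intro: permutes_imp_permutation dest: colstab_permutes)
  show ?thesis
    using sign_row_rotation[OF tableau_s tableau_t g(2)]
    by (simp add: act_def g x perms sign_compose permutation_compose) (simp add: sign_def)
qed

lemma act_act: "act (B', k') (act (B, k) x) = act ((B' - B) \<union> (B - B'), (k + k') mod n) x"
proof -
  have rotations: "f \<circ> row_rotation u k \<circ> row_rotation u k' = f \<circ> row_rotation u ((k + k') mod n)"
    if "tableau shape u" for f u
    using that by (simp add: tableau_shape row_rotation_comp comp_assoc)
  show ?thesis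
    by (simp add: act_def comp_assoc[symmetric] swaps_comp rotations tableau_s tableau_t
        split: prod.splits)
qed

lemma act_0: "act ({}, 0) x = x"
  by (simp add: act_def swaps_empty row_rotation_0 split: prod.splits)

lemma exists_third_row: obtains r where "r < n" "r \<noteq> p 0" "r \<noteq> q 0"
proof -
  have "\<exists>r\<in>{0, 1, 2}. r \<noteq> p 0 \<and> r \<noteq> q 0" by force
  then obtain r where "r \<in> {0, 1, 2}" "r \<noteq> p 0" "r \<noteq> q 0" by blast
  with three_le_n show ?thesis by (intro that[of r]) auto
qed

lemma act_free:
  assumes g: "(B, k) \<in> acting_group" and g': "(B', k') \<in> acting_group"
    and x: "x \<in> matching" and eq: "act (B, k) x = act (B', k') x"
  shows "(B, k) = (B', k')"
proof -
  obtain \<sigma> \<tau> where "x = (\<sigma>, \<tau>)" and \<sigma>: "\<sigma> \<in> colstab shape s"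
    using x by (auto simp: matching_def)
  with eq have eq_s: "swaps B \<circ> \<sigma> \<circ> row_rotation s k = swaps B' \<circ> \<sigma> \<circ> row_rotation s k'"
    by (simp add: act_def)
  have perm: "\<sigma> \<circ> row_rotation s l permutes entries" if "l < n" for l
    using colstab_permutes[OF \<sigma>] row_rotation_permutes[OF tableau_s that]
    by (simp add: psize_shape permutes_compose)
  \<comment> \<open>Evaluate at the entry of \<open>\<sigma> \<circ> row_rotation s k'\<close> that lands on a cell which no swap moves.\<close>
  obtain r where r: "r < n" "r \<noteq> p 0" "r \<noteq> q 0" by (rule exists_third_row)
  have "s (r, 0) \<in> (\<sigma> \<circ> row_rotation s k') ` entries"
    using permutes_image[OF perm] g' r(1) m_pos tableau_in_entries[OF tableau_s] by auto
  then obtain z where z: "z \<in> entries" "\<sigma> (row_rotation s k' z) = s (r, 0)" by auto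
  have "swaps B (\<sigma> (row_rotation s k z)) = s (r, 0)"
    using fun_cong[OF eq_s, of z] z(2) swaps_other_row[OF r] by simp
  then have "\<sigma> (row_rotation s k z) = \<sigma> (row_rotation s k' z)"
    using z(2) swaps_other_row[OF r] swaps_involutive by metis
  then have "row_rotation s k z = row_rotation s k' z"
    using colstab_permutes[OF \<sigma>] by (metis permutes_inj injD)
  then have k: "k = k'"
    using row_rotation_eq_imp_eq[OF tableau_s z(1)] g g' by auto
  have "surj (\<sigma> \<circ> row_rotation s k)"
    by (rule permutes_surj[OF perm]) (use g in auto)
  moreover have "\<forall>y\<in>UNIV.
      (swaps B \<circ> (\<sigma> \<circ> row_rotation s k)) y = (swaps B' \<circ> (\<sigma> \<circ> row_rotation s k)) y"
    using fun_cong[OF eq_s] k by simp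
  ultimately have "swaps B = swaps B'" by (rule surj_fun_eq)
  then have "B = B'" using g g' by (intro swaps_eq_imp_eq) auto
  with k show ?thesis by simp
qed

lemma gram_dvd: "int (n * 2 ^ m) dvd gram shape s t"
proof -
  have "finite matching"
    by (rule finite_subset[of _ "colstab shape s \<times> colstab shape t"])
      (auto simp: matching_def finite_colstab)
  then have "int (card acting_group) dvd (\<Sum>(\<sigma>, \<tau>)\<in>matching. sign \<sigma> * sign \<tau>)"
  proof (rule card_dvd_sum_free_action[where act = act])
    show "acting_group \<noteq> {}" using m_less_n by auto
    fix g x
    assume g: "g \<in> acting_group" and x: "x \<in> matching"
    then show "act g x \<in> matching" by (rule act_in_matching)
    show "(case act g x of (\<sigma>, \<tau>) \<Rightarrow> sign \<sigma> * sign \<tau>)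
        = (case x of (\<sigma>, \<tau>) \<Rightarrow> sign \<sigma> * sign \<tau>)"
      using g x by (rule sign_act)
    obtain B k where gk: "g = (B, k)" "k < n" using g by auto
    show "\<exists>g'\<in>acting_group. act g' (act g x) = x"
      using g gk add_complement_mod[OF gk(2)]
      by (intro bexI[of _ "(B, (n - k) mod n)"]) (auto simp: act_act act_0 add.commute)
    fix g'
    assume g': "g' \<in> acting_group"
    then obtain B' k' where gk': "g' = (B', k')" by auto
    show "\<exists>h\<in>acting_group. act g' (act g x) = act h x"
      using g g' gk gk'
      by (intro bexI[of _ "((B' - B) \<union> (B - B'), (k + k') mod n)"]) (auto simp: act_act)
    show "act g x = act g' x \<Longrightarrow> g = g'"
      using g g' x by (metis act_free surj_pair)
  qed
  moreover have "card acting_group = n * 2 ^ m"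
    by (simp add: card_cartesian_product card_Pow)
  ultimately show ?thesis
    by (simp add: gram_eq_sum_matching matching_def)
qed

end

context rectangle
begin

lemma gram_dvd:
  assumes "tableau shape s" "tableau shape t"
  shows "int (n * 2 ^ m) dvd gram shape s t"
proof -
  obtain p q where "\<And>j. j < m \<Longrightarrow> p j < n \<and> q j < n \<and> p j \<noteq> q j"
    and "\<And>j. j < m \<Longrightarrow> col t (s (p j, j)) = col t (s (q j, j))"
    using exists_column_pairs[OF assms] by blast
  then interpret pair: rectangle_pair m n s t p q
    by unfold_locales (use assms in auto)
  show ?thesis by (rule pair.gram_dvd)
qed

lemma le_schaper:
  assumes "n = 2 ^ k"
  shows "m + k \<le> schaper 2 shape"
proof -
  obtain s0 where s0: "tableau shape s0" using exists_tableau by blast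
  let ?c = "card (colstab shape s0)"
  have "id \<in> colstab shape s0" by (simp add: colstab_iff[OF s0] permutes_id)
  then have c: "0 < ?c" using finite_colstab card_gt_0_iff by blast
  show ?thesis unfolding schaper_def
  proof (rule Greatest_le_nat[where b = ?c])
    show "\<forall>s t. tableau shape s \<longrightarrow> tableau shape t \<longrightarrow> int 2 ^ (m + k) dvd gram shape s t"
      using gram_dvd assms by (simp add: power_add mult.commute)
  next
    fix e
    assume "\<forall>s t. tableau shape s \<longrightarrow> tableau shape t \<longrightarrow> int 2 ^ e dvd gram shape s t"
    then have "int (2 ^ e) dvd int ?c" using s0 gram_diagonal by (metis of_nat_numeral of_nat_power)
    then have "2 ^ e dvd ?c" by (metis of_nat_dvd_iff)
    then have "2 ^ e \<le> ?c" using c by (simp add: dvd_imp_le)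
    then show "e \<le> ?c" using less_exp[of e] by linarith
  qed
qed

end

theorem mainTheorem5:
  shows "schaper 2 (powpart 2 4) \<ge> 4 \<and> schaper 2 (powpart 3 4) \<ge> 5"
proof
  interpret rectangle 2 4 by unfold_locales auto
  show "schaper 2 (powpart 2 4) \<ge> 4" using le_schaper[of 2] by simp
next
  interpret rectangle 3 4 by unfold_locales auto
  show "schaper 2 (powpart 3 4) \<ge> 5" using le_schaper[of 2] by simp
qed

end
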